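(* Let $G$ be a digraph such that $d^+_G(x)+d^-_G(x)\ge |G|+3$ for every vertex $x\in G$ and $d^+_G(x)+d^-_G(y)\ge |G|+1$ for every pair of vertices $x,y\in G$. Let $z_1,z_2$ be distinct vertices of $G$ such that $z_1z_2\notin E(G)$. Then there exists a vertex $a\in N^+_G(z_1)\cap N^-_G(z_2)$ such that $G-\{z_1,z_2,a\}$ is strongly connected.
   Context: Digraphs have no loops and at most one edge in each direction between any two vertices. $N^+_G(x)$ and $N^-_G(x)$ are the out- and in-neighbourhoods of $x$ in $G$, and $d^\pm_G(x)=|N^\pm_G(x)|$. A digraph is strongly connected if for every ordered pair $x,y$ of vertices there is a directed $x$-$y$ path. *)

theory Defs
  imports Main
begin

definition digraph :: "'a set \<Rightarrow> ('a \<times> 'a) set \<Rightarrow> bool" where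
  "digraph V E \<longleftrightarrow> finite V \<and> E \<subseteq> V \<times> V \<and> (\<forall>x. (x, x) \<notin> E)"

definition out_nbrs :: "('a \<times> 'a) set \<Rightarrow> 'a \<Rightarrow> 'a set" where
  "out_nbrs E x = {y. (x, y) \<in> E}"

definition in_nbrs :: "('a \<times> 'a) set \<Rightarrow> 'a \<Rightarrow> 'a set" where
  "in_nbrs E x = {y. (y, x) \<in> E}"

definition outdeg :: "('a \<times> 'a) set \<Rightarrow> 'a \<Rightarrow> nat" where
  "outdeg E x = card (out_nbrs E x)"

definition indeg :: "('a \<times> 'a) set \<Rightarrow> 'a \<Rightarrow> nat" where
  "indeg E x = card (in_nbrs E x)"

definition del_verts_E :: "'a set \<Rightarrow> ('a \<times> 'a) set \<Rightarrow> 'a set \<Rightarrow> ('a \<times> 'a) set" where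
  "del_verts_E V E S = E \<inter> ((V - S) \<times> (V - S))"

definition strongly_connected :: "'a set \<Rightarrow> ('a \<times> 'a) set \<Rightarrow> bool" where
  "strongly_connected V E \<longleftrightarrow> (\<forall>x\<in>V. \<forall>y\<in>V. (x, y) \<in> (E \<inter> (V \<times> V))\<^sup>*)"

end

theory Submission
  imports Defs
begin

text \<open>If \<open>G - {z1, z2, a}\<close> is not strongly connected, its vertices split into nonempty
\<open>S\<close>, \<open>T\<close> with no edge from \<open>S\<close> to \<open>T\<close>. Then vertices of \<open>S\<close> have out-degree at most
\<open>|S| + 2\<close> and vertices of \<open>T\<close> in-degree at most \<open>|T| + 2\<close>; as \<open>|V| + 1 = |S| + |T| + 4\<close>,
the pair condition forces equality, so every vertex of \<open>S\<close> sees all of \<open>S \<union> {z1, z2, a}\<close>,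
every vertex of \<open>T\<close> is seen by all of \<open>T \<union> {z1, z2, a}\<close>, and every vertex of \<open>G\<close> has
in-degree at least \<open>|T| + 2\<close> and out-degree at least \<open>|S| + 2\<close>.

Counting gives at least three common neighbours \<open>z1 \<rightarrow> a \<rightarrow> z2\<close>. If two of them, \<open>a\<close> and
\<open>b\<close>, both failed, with cuts \<open>(S, T)\<close> and \<open>(S', T')\<close>, the degree bounds give \<open>|T| = |T'|\<close>,
\<open>|S| = |S'|\<close>, and \<open>S \<inter> T' = T \<inter> S' = {}\<close> (a vertex there would have degree sum \<open>|V| + 1\<close>).
If \<open>b \<in> S\<close> this forces \<open>T = T'\<close> and \<open>a \<in> S'\<close>, but \<open>a\<close> sends an edge into \<open>T\<close>;
the case \<open>b \<in> T\<close> is symmetric.\<close>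

definition directed_cut :: "('a \<times> 'a) set \<Rightarrow> 'a set \<Rightarrow> 'a set \<Rightarrow> 'a set \<Rightarrow> bool" where
  "directed_cut F W S T \<longleftrightarrow>
     S \<union> T = W \<and> S \<inter> T = {} \<and> S \<noteq> {} \<and> T \<noteq> {} \<and> (\<forall>u\<in>S. \<forall>v\<in>T. (u, v) \<notin> F)"

lemma directed_cutD:
  assumes "directed_cut F W S T"
  shows "S \<union> T = W" "S \<inter> T = {}" "S \<noteq> {}" "T \<noteq> {}" "u \<in> S \<Longrightarrow> v \<in> T \<Longrightarrow> (u, v) \<notin> F"
  using assms unfolding directed_cut_def by blast+

lemma directed_cut_if_not_strongly_connected:
  assumes "\<not> strongly_connected W F"
  obtains S T where "directed_cut F W S T"
proof -
  let ?R = "F \<inter> (W \<times> W)"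
  obtain x y where xy: "x \<in> W" "y \<in> W" "(x, y) \<notin> ?R\<^sup>*"
    using assms unfolding strongly_connected_def by blast
  define S where "S = {v \<in> W. (x, v) \<in> ?R\<^sup>*}"
  have "(u, v) \<notin> F" if "u \<in> S" "v \<in> W - S" for u v
  proof
    assume "(u, v) \<in> F"
    with that have "(x, v) \<in> ?R\<^sup>*"
      unfolding S_def by (auto intro: rtrancl_into_rtrancl)
    with that show False unfolding S_def by simp
  qed
  moreover have "x \<in> S" "y \<in> W - S" using xy unfolding S_def by auto
  ultimately have "directed_cut F W S (W - S)"
    unfolding directed_cut_def S_def by blast
  then show thesis by (rule that)
qed

lemma directed_cut_del_verts_E:
  "directed_cut (del_verts_E V E D) (V - D) S T \<longleftrightarrow> directed_cut E (V - D) S T"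
  unfolding directed_cut_def del_verts_E_def by blast

lemma card_directed_cut:
  assumes "finite V" "D \<subseteq> V" "directed_cut F (V - D) S T"
  shows "card S + card T + card D = card V"
proof -
  have "card S + card T = card (V - D)"
    using directed_cutD[OF assms(3)] assms(1)
    by (metis card_Un_disjoint finite_Diff finite_Un)
  also have "\<dots> = card V - card D"
    using assms by (simp add: card_Diff_subset finite_subset)
  finally show ?thesis
    using assms by (simp add: card_mono)
qed

lemma card_Diff_singleton_Un:
  assumes "finite A" "finite B" "A \<inter> B = {}" "x \<in> A"
  shows "card ((A - {x}) \<union> B) + 1 = card A + card B"
proof -
  have "card ((A - {x}) \<union> B) = card (A - {x}) + card B"
    using assms by (intro card_Un_disjoint) auto
  moreover have "card (A - {x}) + 1 = card A"
    using assms card_gt_0_iff[of A] by auto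
  ultimately show ?thesis by simp
qed

lemma out_nbrs_subset: "digraph V E \<Longrightarrow> out_nbrs E x \<subseteq> V - {x}"
  unfolding digraph_def out_nbrs_def by auto

lemma in_nbrs_subset: "digraph V E \<Longrightarrow> in_nbrs E x \<subseteq> V - {x}"
  unfolding digraph_def in_nbrs_def by auto

lemma outdeg_le: "digraph V E \<Longrightarrow> x \<in> V \<Longrightarrow> outdeg E x \<le> card V - 1"
  unfolding outdeg_def
  by (metis card_Diff_singleton card_mono digraph_def finite_Diff out_nbrs_subset)

lemma indeg_le: "digraph V E \<Longrightarrow> x \<in> V \<Longrightarrow> indeg E x \<le> card V - 1"
  unfolding indeg_def
  by (metis card_Diff_singleton card_mono digraph_def finite_Diff in_nbrs_subset)

lemma out_nbrs_directed_cut: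
  "digraph V E \<Longrightarrow> directed_cut E (V - D) S T \<Longrightarrow> x \<in> S \<Longrightarrow> out_nbrs E x \<subseteq> (S - {x}) \<union> D"
  unfolding directed_cut_def out_nbrs_def digraph_def by blast

lemma in_nbrs_directed_cut:
  "digraph V E \<Longrightarrow> directed_cut E (V - D) S T \<Longrightarrow> y \<in> T \<Longrightarrow> in_nbrs E y \<subseteq> (T - {y}) \<union> D"
  unfolding directed_cut_def in_nbrs_def digraph_def by blast

locale high_degree_digraph =
  fixes V :: "'a set" and E :: "('a \<times> 'a) set"
  assumes digraph: "digraph V E"
    and deg_sum: "x \<in> V \<Longrightarrow> card V + 3 \<le> outdeg E x + indeg E x"
    and deg_pair: "x \<in> V \<Longrightarrow> y \<in> V \<Longrightarrow> x \<noteq> y \<Longrightarrow> card V + 1 \<le> outdeg E x + indeg E y"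
begin

lemma finite_V: "finite V"
  using digraph unfolding digraph_def by simp

lemma card_common_nbrs:
  assumes "z1 \<in> V" "z2 \<in> V" "z1 \<noteq> z2" "(z1, z2) \<notin> E"
  shows "3 \<le> card (out_nbrs E z1 \<inter> in_nbrs E z2)"
proof -
  let ?P = "out_nbrs E z1" and ?Q = "in_nbrs E z2"
  have sub: "?P \<subseteq> V - {z1, z2}" "?Q \<subseteq> V - {z1, z2}"
    using out_nbrs_subset[OF digraph, of z1] in_nbrs_subset[OF digraph, of z2] assms(4)
    unfolding out_nbrs_def in_nbrs_def by auto
  then have "card (?P \<union> ?Q) \<le> card (V - {z1, z2})"
    using finite_V by (intro card_mono) auto
  also have "\<dots> = card V - 2"
    using assms finite_V by (simp add: card_Diff_subset)
  finally have "card (?P \<union> ?Q) \<le> card V - 2" .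
  moreover have "card ?P + card ?Q = card (?P \<union> ?Q) + card (?P \<inter> ?Q)"
    using sub finite_V by (intro card_Un_Int) (auto intro: finite_subset)
  moreover have "card V + 1 \<le> card ?P + card ?Q"
    using deg_pair assms unfolding outdeg_def indeg_def by blast
  moreover have "2 \<le> card V"
    using assms finite_V card_mono[of V "{z1, z2}"] by simp
  ultimately show ?thesis by linarith
qed

context
  fixes D S T
  assumes D: "D \<subseteq> V" "card D = 3"
    and cut: "directed_cut E (V - D) S T"
begin

lemma card_cut: "card S + card T + 3 = card V"
  using card_directed_cut[OF finite_V D(1) cut] D(2) by simp

lemma finite_cut: "finite S" "finite T" "finite D"
  using cut D(1) finite_V unfolding directed_cut_def by (auto intro: finite_subset)

lemma card_cut_nbhds:
  shows "x \<in> S \<Longrightarrow> card ((S - {x}) \<union> D) = card S + 2"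
    and "y \<in> T \<Longrightarrow> card ((T - {y}) \<union> D) = card T + 2"
proof -
  have "S \<inter> D = {}" "T \<inter> D = {}"
    using directed_cutD[OF cut] by auto
  then show "x \<in> S \<Longrightarrow> card ((S - {x}) \<union> D) = card S + 2"
    and "y \<in> T \<Longrightarrow> card ((T - {y}) \<union> D) = card T + 2"
    using card_Diff_singleton_Un[OF finite_cut(1,3)] card_Diff_singleton_Un[OF finite_cut(2,3)] D(2)
    by simp_all
qed

lemma cut_outdeg_le:
  assumes "x \<in> S"
  shows "outdeg E x \<le> card S + 2"
proof -
  have "outdeg E x \<le> card ((S - {x}) \<union> D)"
    unfolding outdeg_def using out_nbrs_directed_cut[OF digraph cut assms] finite_cut
    by (intro card_mono) auto
  then show ?thesis using card_cut_nbhds(1)[OF assms] by simp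
qed

lemma cut_indeg_le:
  assumes "y \<in> T"
  shows "indeg E y \<le> card T + 2"
proof -
  have "indeg E y \<le> card ((T - {y}) \<union> D)"
    unfolding indeg_def using in_nbrs_directed_cut[OF digraph cut assms] finite_cut
    by (intro card_mono) auto
  then show ?thesis using card_cut_nbhds(2)[OF assms] by simp
qed

lemma cut_degrees:
  shows "x \<in> S \<Longrightarrow> outdeg E x = card S + 2"
    and "y \<in> T \<Longrightarrow> indeg E y = card T + 2"
proof -
  have "outdeg E x = card S + 2 \<and> indeg E y = card T + 2" if "x \<in> S" "y \<in> T" for x y
  proof -
    have "x \<in> V" "y \<in> V" "x \<noteq> y"
      using directed_cutD[OF cut] that by auto
    then have "card S + card T + 4 \<le> outdeg E x + indeg E y"
      using deg_pair[of x y] card_cut by simp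
    then show ?thesis
      using cut_outdeg_le[OF that(1)] cut_indeg_le[OF that(2)] by linarith
  qed
  moreover obtain x0 y0 where "x0 \<in> S" "y0 \<in> T" using directed_cutD[OF cut] by blast
  ultimately show "x \<in> S \<Longrightarrow> outdeg E x = card S + 2" "y \<in> T \<Longrightarrow> indeg E y = card T + 2"
    by metis+
qed

lemma cut_nbrs_saturated:
  shows "x \<in> S \<Longrightarrow> out_nbrs E x = (S - {x}) \<union> D"
    and "y \<in> T \<Longrightarrow> in_nbrs E y = (T - {y}) \<union> D"
proof -
  have fin: "finite ((S - {x}) \<union> D)" "finite ((T - {y}) \<union> D)"
    using finite_cut by simp_all
  show "x \<in> S \<Longrightarrow> out_nbrs E x = (S - {x}) \<union> D"
    using card_subset_eq[OF fin(1) out_nbrs_directed_cut[OF digraph cut]]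
      cut_degrees(1) card_cut_nbhds(1) unfolding outdeg_def by simp
  show "y \<in> T \<Longrightarrow> in_nbrs E y = (T - {y}) \<union> D"
    using card_subset_eq[OF fin(2) in_nbrs_directed_cut[OF digraph cut]]
      cut_degrees(2) card_cut_nbhds(2) unfolding indeg_def by simp
qed

lemma card_cut_ge_2: "2 \<le> card S" "2 \<le> card T"
proof -
  obtain x y where xy: "x \<in> S" "y \<in> T" using directed_cutD[OF cut] by blast
  then have "x \<in> V" "y \<in> V" using directed_cutD[OF cut] by auto
  then have "indeg E x \<le> card V - 1" "outdeg E y \<le> card V - 1"
    and "card V + 3 \<le> outdeg E x + indeg E x" "card V + 3 \<le> outdeg E y + indeg E y"
    using indeg_le[OF digraph] outdeg_le[OF digraph] deg_sum by auto
  moreover have "0 < card V" using \<open>x \<in> V\<close> finite_V card_gt_0_iff by blast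
  ultimately show "2 \<le> card S" "2 \<le> card T"
    using cut_degrees(1)[OF xy(1)] cut_degrees(2)[OF xy(2)] by linarith+
qed

lemma degrees_ge_cut_sides:
  assumes "w \<in> V"
  shows "card T + 2 \<le> indeg E w" "card S + 2 \<le> outdeg E w"
proof -
  have "\<not> S \<subseteq> {w}" "\<not> T \<subseteq> {w}"
    using card_cut_ge_2 card_mono[of "{w}" S] card_mono[of "{w}" T] by auto
  then obtain x y where "x \<in> S" "x \<noteq> w" "y \<in> T" "y \<noteq> w" by blast
  moreover from this have "x \<in> V" "y \<in> V" using directed_cutD[OF cut] by auto
  ultimately have "card V + 1 \<le> outdeg E x + indeg E w" "card V + 1 \<le> outdeg E w + indeg E y"
    using deg_pair assms by auto
  then show "card T + 2 \<le> indeg E w" "card S + 2 \<le> outdeg E w"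
    using cut_degrees(1)[OF \<open>x \<in> S\<close>] cut_degrees(2)[OF \<open>y \<in> T\<close>] card_cut
    by linarith+
qed

end

lemma no_cuts_after_two_deletions:
  assumes z: "z1 \<in> V" "z2 \<in> V" "z1 \<noteq> z2"
    and ab: "a \<in> V - {z1, z2}" "b \<in> V - {z1, z2}" "a \<noteq> b"
    and cut: "directed_cut E (V - {z1, z2, a}) S T"
    and cut': "directed_cut E (V - {z1, z2, b}) S' T'"
  shows False
proof -
  have "{z1, z2, a} \<subseteq> V" "card {z1, z2, a} = 3" "{z1, z2, b} \<subseteq> V" "card {z1, z2, b} = 3"
    using z ab by auto
  note cut_a = this(1,2) cut and cut_b = this(3,4) cut'
  note A = directed_cutD[OF cut] and B = directed_cutD[OF cut']
  have "card T = card T'"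
  proof -
    obtain y y' where y: "y \<in> T" "y' \<in> T'" using A(4) B(4) by blast
    then have "y \<in> V" "y' \<in> V" using A(1) B(1) by blast+
    then have "card T' + 2 \<le> indeg E y" "card T + 2 \<le> indeg E y'"
      using degrees_ge_cut_sides(1)[OF cut_b] degrees_ge_cut_sides(1)[OF cut_a] by blast+
    with cut_degrees(2)[OF cut_a y(1)] cut_degrees(2)[OF cut_b y(2)] show ?thesis
      by linarith
  qed
  moreover have "card S = card S'"
    using calculation card_cut[OF cut_a] card_cut[OF cut_b] by simp
  have "v \<notin> S \<inter> T'" for v
  proof
    assume "v \<in> S \<inter> T'"
    then have "v \<in> S" "v \<in> T'" "v \<in> V" using A(1) by auto
    then show False
      using deg_sum[of v] cut_degrees(1)[OF cut_a] cut_degrees(2)[OF cut_b]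
        card_cut[OF cut_a] \<open>card T = card T'\<close> by fastforce
  qed
  moreover have "v \<notin> T \<inter> S'" for v
  proof
    assume "v \<in> T \<inter> S'"
    then have "v \<in> T" "v \<in> S'" "v \<in> V" using A(1) by auto
    then show False
      using deg_sum[of v] cut_degrees(2)[OF cut_a] cut_degrees(1)[OF cut_b]
        card_cut[OF cut_a] \<open>card S = card S'\<close> by fastforce
  qed
  ultimately have disjoint: "S \<inter> T' = {}" "T \<inter> S' = {}" by blast+
  have "b \<in> S \<union> T" using ab A(1) by blast
  then show False
  proof
    assume "b \<in> S"
    then have "T \<subseteq> T'" using A(1,2) B(1) disjoint(2) by blast
    then have "T = T'"
      using \<open>card T = card T'\<close> finite_cut(2)[OF cut_b] by (simp add: card_subset_eq)
    moreover obtain y where "y \<in> T" using A(4) by blast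
    moreover have "a \<in> S'" using ab A(1) B(1) calculation by blast
    moreover have "(a, y) \<in> E"
      using cut_nbrs_saturated(2)[OF cut_a \<open>y \<in> T\<close>] unfolding in_nbrs_def by blast
    ultimately show False using B(5) by blast
  next
    assume "b \<in> T"
    then have "S \<subseteq> S'" using A(1,2) B(1) disjoint(1) by blast
    then have "S = S'"
      using \<open>card S = card S'\<close> finite_cut(1)[OF cut_b] by (simp add: card_subset_eq)
    moreover obtain x where "x \<in> S" using A(3) by blast
    moreover have "a \<in> T'" using ab A(1) B(1) calculation by blast
    moreover have "(x, a) \<in> E"
      using cut_nbrs_saturated(1)[OF cut_a \<open>x \<in> S\<close>] unfolding out_nbrs_def by blast
    ultimately show False using B(5) by blast
  qed
qed

end

theorem lemma9:
  fixes V :: "'a set" and E :: "('a \<times> 'a) set" and z1 z2 :: 'a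
  assumes "digraph V E"
    and "\<forall>x\<in>V. outdeg E x + indeg E x \<ge> card V + 3"
    and "\<forall>x\<in>V. \<forall>y\<in>V. x \<noteq> y \<longrightarrow> outdeg E x + indeg E y \<ge> card V + 1"
    and "z1 \<in> V" and "z2 \<in> V" and "z1 \<noteq> z2"
    and "(z1, z2) \<notin> E"
  shows "\<exists>a \<in> out_nbrs E z1 \<inter> in_nbrs E z2.
           strongly_connected (V - {z1, z2, a}) (del_verts_E V E {z1, z2, a})"
proof (rule ccontr)
  assume not_sc: "\<not> ?thesis"
  interpret high_degree_digraph V E
    using assms(1-3) by unfold_locales auto
  let ?C = "out_nbrs E z1 \<inter> in_nbrs E z2"
  have "\<not> ?C \<subseteq> {x}" for x
    using card_common_nbrs[OF assms(4-7)] card_mono[of "{x}" ?C] by auto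
  then obtain a b where ab: "a \<in> ?C" "b \<in> ?C" "a \<noteq> b" by blast
  have "?C \<subseteq> V - {z1, z2}"
    using out_nbrs_subset[OF assms(1)] assms(7) unfolding out_nbrs_def in_nbrs_def by blast
  with ab have "a \<in> V - {z1, z2}" "b \<in> V - {z1, z2}" by blast+
  moreover obtain S T S' T' where
    "directed_cut E (V - {z1, z2, a}) S T" "directed_cut E (V - {z1, z2, b}) S' T'"
    using ab not_sc directed_cut_if_not_strongly_connected directed_cut_del_verts_E by meson
  ultimately show False
    using no_cuts_after_two_deletions[OF assms(4-6)] ab(3) by blast
qed

end
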